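(* Let $\Gamma$ be a distance-regular graph with diameter $D\ge 3$ and valency $k$, and assume $\Gamma$ is bipartite or almost bipartite. Then: (i) for every $\theta\in\mathbb{R}$ the pair $\theta,k$ is tight; (ii) for every $\theta\in\mathbb{R}$ the pair $\theta,-k$ is tight; (iii) $\Gamma$ has no further tight pairs, i.e. if $\theta,\theta'\in\mathbb{R}$ form a tight pair then at least one of $\theta,\theta'$ lies in $\{k,-k\}$.
   Context: $\Gamma$ is a finite connected undirected graph without loops or multiple edges, with path-length distance $\partial$ and diameter $D$; it is distance-regular with intersection numbers $a_i=p^i_{1i}$, $b_i=p^i_{1,i+1}$, $c_i=p^i_{1,i-1}$ (with $c_0=0$, $b_D=0$), valency $k=b_0$, and $c_i+a_i+b_i=k$ for $0\le i\le D$. $\Gamma$ is bipartite if $a_i=0$ for $0\le i\le D$; almost bipartite if $a_D\ne 0$ and $a_i=0$ for $0\le i\le D-1$. For $\theta\in\mathbb{R}$, the pseudo cosine sequence for $\theta$ is the unique sequence of reals $\sigma_0,\dots,\sigma_D$ with $\sigma_0=1$ and $c_i\sigma_{i-1}+a_i\sigma_i+b_i\sigma_{i+1}=\theta\sigma_i$ for $0\le i\le D-1$ ($\sigma_{-1}$ indeterminate, as $c_0=0$); then $\theta=k\sigma_1$. A sequence is a pseudo cosine sequence if it is the pseudo cosine sequence for some real $\theta$. Two pseudo cosine sequences $\sigma_0,\dots,\sigma_D$ and $\rho_0,\dots,\rho_D$ form a tight pair if $\sigma_0\rho_0,\sigma_1\rho_1,\dots,\sigma_D\rho_D$ is a pseudo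 cosine sequence. Two reals $\theta,\theta'$ form a tight pair if their pseudo cosine sequences form a tight pair. *)

theory Defs
  imports Complex_Main
begin

definition simple_graph :: "'a set \<Rightarrow> ('a \<Rightarrow> 'a \<Rightarrow> bool) \<Rightarrow> bool" where
  "simple_graph V E \<longleftrightarrow> finite V \<and> V \<noteq> {} \<and>
     (\<forall>x y. E x y \<longrightarrow> x \<in> V \<and> y \<in> V) \<and>
     (\<forall>x y. E x y \<longrightarrow> E y x) \<and> (\<forall>x. \<not> E x x)"

text \<open>A walk is a nonempty list of vertices with consecutive entries adjacent;
  its length is the number of edges, i.e. length of the list minus one.\<close>

definition walk :: "'a set \<Rightarrow> ('a \<Rightarrow> 'a \<Rightarrow> bool) \<Rightarrow> 'a list \<Rightarrow> bool" where
  "walk V E xs \<longleftrightarrow> xs \<noteq> [] \<and> set xs \<subseteq> V \<and>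
     (\<forall>i. Suc i < length xs \<longrightarrow> E (xs ! i) (xs ! Suc i))"

definition walk_betw :: "'a set \<Rightarrow> ('a \<Rightarrow> 'a \<Rightarrow> bool) \<Rightarrow> 'a \<Rightarrow> nat \<Rightarrow> 'a \<Rightarrow> bool" where
  "walk_betw V E x n y \<longleftrightarrow>
     (\<exists>xs. walk V E xs \<and> hd xs = x \<and> last xs = y \<and> length xs = Suc n)"

definition connected_graph :: "'a set \<Rightarrow> ('a \<Rightarrow> 'a \<Rightarrow> bool) \<Rightarrow> bool" where
  "connected_graph V E \<longleftrightarrow> (\<forall>x\<in>V. \<forall>y\<in>V. \<exists>n. walk_betw V E x n y)"

definition gdist :: "'a set \<Rightarrow> ('a \<Rightarrow> 'a \<Rightarrow> bool) \<Rightarrow> 'a \<Rightarrow> 'a \<Rightarrow> nat" where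
  "gdist V E x y = (LEAST n. walk_betw V E x n y)"

definition diameter :: "'a set \<Rightarrow> ('a \<Rightarrow> 'a \<Rightarrow> bool) \<Rightarrow> nat" where
  "diameter V E = Max {gdist V E x y | x y. x \<in> V \<and> y \<in> V}"

text \<open>drg V E D a b c: (V,E) is a finite connected simple graph of diameter D
  which is distance-regular with intersection numbers
  a i = p^i_{1i}, b i = p^i_{1,i+1}, c i = p^i_{1,i-1}, i.e. for all vertices x, y
  at distance i, the number of neighbours z of y at distance i-1 / i / i+1 from x
  equals c i / a i / b i respectively.  (Then c 0 = 0 and b D = 0 automatically;
  the valency is k = b 0.)\<close>

definition drg :: "'a set \<Rightarrow> ('a \<Rightarrow> 'a \<Rightarrow> bool) \<Rightarrow> nat \<Rightarrow>
    (nat \<Rightarrow> nat) \<Rightarrow> (nat \<Rightarrow> nat) \<Rightarrow> (nat \<Rightarrow> nat) \<Rightarrow> bool" where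
  "drg V E D a b c \<longleftrightarrow> simple_graph V E \<and> connected_graph V E \<and> D = diameter V E \<and>
     (\<forall>x\<in>V. \<forall>y\<in>V.
        card {z. E y z \<and> gdist V E x z + 1 = gdist V E x y} = c (gdist V E x y) \<and>
        card {z. E y z \<and> gdist V E x z = gdist V E x y} = a (gdist V E x y) \<and>
        card {z. E y z \<and> gdist V E x z = gdist V E x y + 1} = b (gdist V E x y))"

definition bipartite_drg :: "nat \<Rightarrow> (nat \<Rightarrow> nat) \<Rightarrow> bool" where
  "bipartite_drg D a \<longleftrightarrow> (\<forall>i\<le>D. a i = 0)"

definition almost_bipartite_drg :: "nat \<Rightarrow> (nat \<Rightarrow> nat) \<Rightarrow> bool" where
  "almost_bipartite_drg D a \<longleftrightarrow> a D \<noteq> 0 \<and> (\<forall>i<D. a i = 0)"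

text \<open>sigma (restricted to 0..D) is the pseudo cosine sequence for theta.
  The term c_0 sigma_{-1} is omitted for i = 0 (c_0 = 0).\<close>

definition pseudo_cosine_for :: "nat \<Rightarrow> (nat \<Rightarrow> nat) \<Rightarrow> (nat \<Rightarrow> nat) \<Rightarrow> (nat \<Rightarrow> nat) \<Rightarrow>
    real \<Rightarrow> (nat \<Rightarrow> real) \<Rightarrow> bool" where
  "pseudo_cosine_for D a b c \<theta> \<sigma> \<longleftrightarrow> \<sigma> 0 = 1 \<and>
     (\<forall>i<D. (if i = 0 then 0 else real (c i) * \<sigma> (i - 1)) + real (a i) * \<sigma> i
              + real (b i) * \<sigma> (Suc i) = \<theta> * \<sigma> i)"

definition pseudo_cosine :: "nat \<Rightarrow> (nat \<Rightarrow> nat) \<Rightarrow> (nat \<Rightarrow> nat) \<Rightarrow> (nat \<Rightarrow> nat) \<Rightarrow>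
    (nat \<Rightarrow> real) \<Rightarrow> bool" where
  "pseudo_cosine D a b c \<sigma> \<longleftrightarrow> (\<exists>\<theta>. pseudo_cosine_for D a b c \<theta> \<sigma>)"

definition tight_seq :: "nat \<Rightarrow> (nat \<Rightarrow> nat) \<Rightarrow> (nat \<Rightarrow> nat) \<Rightarrow> (nat \<Rightarrow> nat) \<Rightarrow>
    (nat \<Rightarrow> real) \<Rightarrow> (nat \<Rightarrow> real) \<Rightarrow> bool" where
  "tight_seq D a b c \<sigma> \<rho> \<longleftrightarrow> pseudo_cosine D a b c \<sigma> \<and> pseudo_cosine D a b c \<rho> \<and>
     pseudo_cosine D a b c (\<lambda>i. \<sigma> i * \<rho> i)"

text \<open>theta, theta' form a tight pair if their pseudo cosine sequences form a
  tight pair (these sequences are unique on 0..D in a distance-regular graph).\<close>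

definition tight_pair :: "nat \<Rightarrow> (nat \<Rightarrow> nat) \<Rightarrow> (nat \<Rightarrow> nat) \<Rightarrow> (nat \<Rightarrow> nat) \<Rightarrow>
    real \<Rightarrow> real \<Rightarrow> bool" where
  "tight_pair D a b c \<theta> \<theta>' \<longleftrightarrow>
     (\<exists>\<sigma> \<rho>. pseudo_cosine_for D a b c \<theta> \<sigma> \<and> pseudo_cosine_for D a b c \<theta>' \<rho> \<and>
             tight_seq D a b c \<sigma> \<rho>)"

end

theory Submission
  imports Defs
begin

text \<open>In a bipartite or almost bipartite distance-regular graph \<open>a\<^sub>i = 0\<close> and
  \<open>c\<^sub>i + b\<^sub>i = k\<close> for \<open>i < D\<close>. Hence the constant sequence \<open>1\<close> is the pseudo cosine
  sequence for \<open>k\<close>, and multiplying any pseudo cosine sequence for \<open>\<theta>\<close> by \<open>(-1)\<^sup>i\<close>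
  gives the one for \<open>-\<theta>\<close>; so every \<open>\<theta>\<close> is tight with \<open>k\<close> and with \<open>-k\<close>.
  Conversely the recurrence at \<open>i = 0, 1\<close> gives \<open>\<theta> = k\<sigma>\<^sub>1\<close> and
  \<open>1 + (k - 1)\<sigma>\<^sub>2 = k\<sigma>\<^sub>1\<^sup>2\<close>. Applying this to \<open>\<sigma>\<close>, \<open>\<rho>\<close> and \<open>\<sigma>\<rho>\<close> and eliminating
  \<open>\<sigma>\<^sub>2, \<rho>\<^sub>2\<close> leaves \<open>k(\<sigma>\<^sub>1\<^sup>2 - 1)(\<rho>\<^sub>1\<^sup>2 - 1) = 0\<close>, i.e. \<open>\<sigma>\<^sub>1 = \<plusminus>1\<close> or \<open>\<rho>\<^sub>1 = \<plusminus>1\<close>.\<close>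

locale connected_simple_graph =
  fixes V :: "'a set" and E :: "'a \<Rightarrow> 'a \<Rightarrow> bool"
  assumes simple: "simple_graph V E" and connected: "connected_graph V E"
begin

lemma finite_vertices: "finite V"
  using simple by (simp add: simple_graph_def)

lemma edge_in_vertices: "E x y \<Longrightarrow> x \<in> V \<and> y \<in> V"
  using simple by (simp add: simple_graph_def)

lemma edge_sym: "E x y \<Longrightarrow> E y x"
  using simple by (simp add: simple_graph_def)

lemma edge_irrefl: "\<not> E x x"
  using simple by (simp add: simple_graph_def)

lemma finite_neighbours: "finite {z. E y z \<and> P z}"
  by (rule finite_subset[OF _ finite_vertices]) (use edge_in_vertices in blast)

lemma walk_betw_refl: "x \<in> V \<Longrightarrow> walk_betw V E x 0 x"
  unfolding walk_betw_def walk_def by (rule exI[of _ "[x]"]) auto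

lemma walk_betw_0_imp_eq: "walk_betw V E x 0 y \<Longrightarrow> x = y"
  unfolding walk_betw_def by (metis length_0_conv length_Suc_conv last_ConsL list.sel(1))

lemma walk_snoc:
  assumes "walk V E xs" and "E (last xs) z"
  shows "walk V E (xs @ [z])"
proof -
  have "xs \<noteq> []" using assms(1) by (simp add: walk_def)
  have "E ((xs @ [z]) ! i) ((xs @ [z]) ! Suc i)" if "Suc i < length (xs @ [z])" for i
  proof (cases "Suc i < length xs")
    case True
    then show ?thesis using assms(1) by (simp add: walk_def nth_append)
  next
    case False
    then have "i = length xs - 1" using that by simp
    then show ?thesis using assms(2) \<open>xs \<noteq> []\<close> by (simp add: nth_append last_conv_nth)
  qed
  then show ?thesis using assms edge_in_vertices unfolding walk_def by auto
qed

lemma walk_betw_snoc: "walk_betw V E x n y \<Longrightarrow> E y z \<Longrightarrow> walk_betw V E x (Suc n) z"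
  unfolding walk_betw_def by (metis walk_snoc hd_append2 last_snoc length_append_singleton walk_def)

lemma walk_betw_SucE:
  assumes "walk_betw V E x (Suc n) z"
  obtains y where "walk_betw V E x n y" and "E y z"
proof -
  obtain xs where xs: "walk V E xs" "hd xs = x" "last xs = z" "length xs = Suc (Suc n)"
    using assms unfolding walk_betw_def by blast
  define ys where "ys = butlast xs"
  have len: "length ys = Suc n" using xs(4) by (simp add: ys_def)
  then have "ys \<noteq> []" by auto
  have xs_eq: "xs = ys @ [z]"
    using xs(3,4) by (metis ys_def append_butlast_last_id list.size(3) nat.distinct(1))
  have "walk V E ys"
    unfolding walk_def
  proof (intro conjI allI impI)
    show "set ys \<subseteq> V" using xs(1) by (auto simp: walk_def ys_def dest: in_set_butlastD)
    fix i assume "Suc i < length ys"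
    moreover have "E (xs ! i) (xs ! Suc i)" using xs(1,4) calculation len by (simp add: walk_def)
    ultimately show "E (ys ! i) (ys ! Suc i)" by (simp add: ys_def nth_butlast)
  qed fact
  moreover have "E (last ys) z"
    using xs(1) len \<open>ys \<noteq> []\<close> unfolding walk_def xs_eq
    by (auto simp: nth_append last_conv_nth elim!: allE[of _ n])
  moreover have "hd ys = x" using xs(2) \<open>ys \<noteq> []\<close> by (simp add: xs_eq)
  ultimately show ?thesis using that len unfolding walk_betw_def by blast
qed

lemma walk_betw_gdist: "x \<in> V \<Longrightarrow> y \<in> V \<Longrightarrow> walk_betw V E x (gdist V E x y) y"
  unfolding gdist_def using connected connected_graph_def by (metis LeastI_ex)

lemma gdist_le: "walk_betw V E x n y \<Longrightarrow> gdist V E x y \<le> n"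
  unfolding gdist_def by (rule Least_le)

lemma gdist_eq_0_iff: "x \<in> V \<Longrightarrow> y \<in> V \<Longrightarrow> gdist V E x y = 0 \<longleftrightarrow> x = y"
  by (metis walk_betw_gdist walk_betw_0_imp_eq gdist_le walk_betw_refl le_zero_eq)

lemma gdist_edge_le: "x \<in> V \<Longrightarrow> E y z \<Longrightarrow> gdist V E x z \<le> gdist V E x y + 1"
  by (metis edge_in_vertices walk_betw_gdist walk_betw_snoc gdist_le Suc_eq_plus1)

lemma gdist_edge: "E y z \<Longrightarrow> gdist V E y z = 1"
  using gdist_edge_le[of y y z] gdist_eq_0_iff[of y] gdist_eq_0_iff[of y z]
  by (metis edge_in_vertices edge_irrefl add_0 le_neq_implies_less less_one)

lemma gdist_SucE:
  assumes "x \<in> V" and "z \<in> V" and "gdist V E x z = Suc m"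
  obtains y where "E y z" and "gdist V E x y = m"
proof -
  obtain y where y: "walk_betw V E x m y" "E y z"
    using walk_betw_SucE walk_betw_gdist assms by metis
  have "gdist V E x y \<le> m" using gdist_le y(1) .
  moreover have "gdist V E x z \<le> gdist V E x y + 1" using gdist_edge_le assms(1) y(2) .
  ultimately show ?thesis using that y(2) assms(3) by simp
qed

lemma gdist_attains_below:
  assumes "x \<in> V" and "y \<in> V" and "gdist V E x y = n" and "i \<le> n"
  shows "\<exists>x\<in>V. \<exists>y\<in>V. gdist V E x y = i"
  using assms(2-4)
proof (induction n arbitrary: y)
  case (Suc n)
  show ?case
  proof (cases "i = Suc n")
    case False
    obtain w where "E w y" and "gdist V E x w = n" using gdist_SucE assms(1) Suc.prems(1,2) .
    moreover have "i \<le> n" using Suc.prems(3) False by simp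
    ultimately show ?thesis using Suc.IH edge_in_vertices by blast
  qed (use Suc.prems assms(1) in auto)
qed (use assms(1) in auto)

lemma gdist_attains_le_diameter:
  assumes "i \<le> diameter V E"
  shows "\<exists>x\<in>V. \<exists>y\<in>V. gdist V E x y = i"
proof -
  let ?S = "{gdist V E x y | x y. x \<in> V \<and> y \<in> V}"
  have S: "?S = (\<lambda>(x, y). gdist V E x y) ` (V \<times> V)" by auto
  then have "finite ?S" using finite_vertices by simp
  moreover have "?S \<noteq> {}" using S simple by (simp add: simple_graph_def)
  ultimately have "diameter V E \<in> ?S" unfolding diameter_def by (rule Max_in)
  then obtain x y where "x \<in> V" "y \<in> V" "gdist V E x y = diameter V E" by auto
  then show ?thesis using assms by (rule gdist_attains_below)
qed

lemma card_neighbours_split: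
  assumes "x \<in> V"
  shows "card {z. E y z} = card {z. E y z \<and> gdist V E x z + 1 = gdist V E x y}
     + card {z. E y z \<and> gdist V E x z = gdist V E x y}
     + card {z. E y z \<and> gdist V E x z = gdist V E x y + 1}"
proof -
  let ?C = "{z. E y z \<and> gdist V E x z + 1 = gdist V E x y}"
  let ?A = "{z. E y z \<and> gdist V E x z = gdist V E x y}"
  let ?B = "{z. E y z \<and> gdist V E x z = gdist V E x y + 1}"
  have split: "{z. E y z} = ?C \<union> ?A \<union> ?B"
  proof (intro set_eqI iffI)
    fix z assume "z \<in> {z. E y z}"
    then have "E y z" by simp
    with gdist_edge_le[OF assms this] gdist_edge_le[OF assms edge_sym[OF this]]
    show "z \<in> ?C \<union> ?A \<union> ?B" by auto
  qed auto
  have "?C \<inter> ?A = {}" and "(?C \<union> ?A) \<inter> ?B = {}" by (auto simp del: One_nat_def)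
  then show ?thesis unfolding split by (simp add: card_Un_disjoint finite_neighbours)
qed

lemma neighbours_at_distance_1: "{z. E y z \<and> gdist V E y z = 1} = {z. E y z}"
  using gdist_edge by auto

end

locale distance_regular_graph =
  fixes V :: "'a set" and E :: "'a \<Rightarrow> 'a \<Rightarrow> bool"
    and D :: nat and a b c :: "nat \<Rightarrow> nat"
  assumes drg: "drg V E D a b c"

sublocale distance_regular_graph \<subseteq> connected_simple_graph
  using drg unfolding drg_def by unfold_locales blast+

context distance_regular_graph
begin

lemma diameter_eq: "diameter V E = D"
  using drg by (simp add: drg_def)

lemma card_predecessors: "x \<in> V \<Longrightarrow> y \<in> V \<Longrightarrow>
    card {z. E y z \<and> gdist V E x z + 1 = gdist V E x y} = c (gdist V E x y)"
  using drg by (simp add: drg_def)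

lemma card_peers: "x \<in> V \<Longrightarrow> y \<in> V \<Longrightarrow>
    card {z. E y z \<and> gdist V E x z = gdist V E x y} = a (gdist V E x y)"
  using drg by (simp add: drg_def)

lemma card_successors: "x \<in> V \<Longrightarrow> y \<in> V \<Longrightarrow>
    card {z. E y z \<and> gdist V E x z = gdist V E x y + 1} = b (gdist V E x y)"
  using drg by (simp add: drg_def)

lemma card_neighbours: "y \<in> V \<Longrightarrow> card {z. E y z} = b 0"
  using card_successors[of y y] gdist_eq_0_iff[of y y] neighbours_at_distance_1[of y] by simp

lemma intersection_numbers_sum: "i \<le> D \<Longrightarrow> c i + a i + b i = b 0"
proof -
  assume "i \<le> D"
  then obtain x y where xy: "x \<in> V" "y \<in> V" "gdist V E x y = i"
    using gdist_attains_le_diameter[of i] by (auto simp: diameter_eq)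
  show ?thesis
    using card_neighbours_split[OF xy(1), of y] card_neighbours[OF xy(2)]
      card_predecessors[OF xy(1,2)] card_peers[OF xy(1,2)] card_successors[OF xy(1,2)] xy(3)
    by simp
qed

lemma b_pos: "i < D \<Longrightarrow> b i > 0"
proof -
  assume "i < D"
  then obtain x z where xz: "x \<in> V" "z \<in> V" "gdist V E x z = Suc i"
    using gdist_attains_le_diameter[of "Suc i"] by (auto simp: diameter_eq)
  then obtain y where y: "E y z" "gdist V E x y = i" by (rule gdist_SucE)
  then have "z \<in> {z'. E y z' \<and> gdist V E x z' = gdist V E x y + 1}" using xz(3) by simp
  then have "card {z'. E y z' \<and> gdist V E x z' = gdist V E x y + 1} > 0"
    using finite_neighbours card_gt_0_iff by (metis empty_iff)
  then show ?thesis using card_successors[OF xz(1), of y] y edge_in_vertices by simp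
qed

lemma c_1: "1 \<le> D \<Longrightarrow> c 1 = 1"
proof -
  assume "1 \<le> D"
  then obtain x y where xy: "x \<in> V" "y \<in> V" "gdist V E x y = Suc 0"
    using gdist_attains_le_diameter[of 1] by (auto simp: diameter_eq)
  have at_x: "z = x" if "E y z" and "gdist V E x z = 0" for z
    using that gdist_eq_0_iff[OF xy(1)] edge_in_vertices by blast
  obtain w where "E w y" and "gdist V E x w = 0" using xy by (rule gdist_SucE)
  then have "E y x" using at_x edge_sym by blast
  then have "{z. E y z \<and> gdist V E x z + 1 = gdist V E x y} = {x}"
    using at_x xy(3) gdist_eq_0_iff[OF xy(1) xy(1)] by auto
  then show ?thesis using card_predecessors[OF xy(1,2)] xy(3) by simp
qed

end

fun pseudo_cosine_seq ::
  "(nat \<Rightarrow> nat) \<Rightarrow> (nat \<Rightarrow> nat) \<Rightarrow> (nat \<Rightarrow> nat) \<Rightarrow> real \<Rightarrow> nat \<Rightarrow> real" where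
  "pseudo_cosine_seq a b c \<theta> 0 = 1"
| "pseudo_cosine_seq a b c \<theta> (Suc 0) = (\<theta> - a 0) / b 0"
| "pseudo_cosine_seq a b c \<theta> (Suc (Suc i)) =
     ((\<theta> - a (Suc i)) * pseudo_cosine_seq a b c \<theta> (Suc i)
       - c (Suc i) * pseudo_cosine_seq a b c \<theta> i) / b (Suc i)"

lemma pseudo_cosine_for_seq:
  assumes "\<And>i. i < D \<Longrightarrow> b i > 0"
  shows "pseudo_cosine_for D a b c \<theta> (pseudo_cosine_seq a b c \<theta>)"
  unfolding pseudo_cosine_for_def
proof (intro conjI allI impI)
  fix i assume "i < D"
  then have "real (b i) \<noteq> 0" using assms by simp
  then show "(if i = 0 then 0 else c i * pseudo_cosine_seq a b c \<theta> (i - 1))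
      + a i * pseudo_cosine_seq a b c \<theta> i + b i * pseudo_cosine_seq a b c \<theta> (Suc i)
      = \<theta> * pseudo_cosine_seq a b c \<theta> i"
    by (cases i) (simp_all add: field_simps)
qed simp

lemma pseudo_cosine_for_recurrence:
  "pseudo_cosine_for D a b c \<theta> \<sigma> \<Longrightarrow> i < D \<Longrightarrow>
   (if i = 0 then 0 else c i * \<sigma> (i - 1)) + a i * \<sigma> i + b i * \<sigma> (Suc i) = \<theta> * \<sigma> i"
  unfolding pseudo_cosine_for_def by blast

lemma pseudo_cosine_for_const_1:
  assumes "\<And>i. i < D \<Longrightarrow> c i + a i + b i = b 0"
  shows "pseudo_cosine_for D a b c (b 0) (\<lambda>_. 1)"
  unfolding pseudo_cosine_for_def
proof (intro conjI allI impI)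
  fix i assume "i < D"
  then have "(if i = 0 then 0 else c i) + a i + b i = b 0"
    using assms[OF \<open>i < D\<close>] by (cases "i = 0") simp_all
  then show "(if i = 0 then 0 else real (c i) * 1) + real (a i) * 1 + real (b i) * 1 = real (b 0) * 1"
    by (cases "i = 0") (simp_all flip: of_nat_add)
qed simp

lemma pseudo_cosine_for_sign_twist:
  assumes "\<And>i. i < D \<Longrightarrow> a i = 0" and "pseudo_cosine_for D a b c \<theta> \<sigma>"
  shows "pseudo_cosine_for D a b c (- \<theta>) (\<lambda>i. (-1) ^ i * \<sigma> i)"
  unfolding pseudo_cosine_for_def
proof (intro conjI allI impI)
  show "(-1) ^ 0 * \<sigma> 0 = 1" using assms(2) by (simp add: pseudo_cosine_for_def)
  fix i assume "i < D"
  note recurrence = pseudo_cosine_for_recurrence[OF assms(2) \<open>i < D\<close>]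
  show "(if i = 0 then 0 else c i * ((-1) ^ (i - 1) * \<sigma> (i - 1)))
      + a i * ((-1) ^ i * \<sigma> i) + b i * ((-1) ^ Suc i * \<sigma> (Suc i)) = - \<theta> * ((-1) ^ i * \<sigma> i)"
  proof (cases i)
    case 0
    then show ?thesis using recurrence assms \<open>i < D\<close> by simp
  next
    case (Suc j)
    have a_i: "a i = 0" using assms(1) \<open>i < D\<close> .
    have "c i * \<sigma> j + b i * \<sigma> (Suc i) = \<theta> * \<sigma> i" using recurrence a_i Suc by simp
    then have "c i * ((-1) ^ j * \<sigma> j) + b i * ((-1) ^ j * \<sigma> (Suc i)) = (-1) ^ j * (\<theta> * \<sigma> i)"
      by (metis distrib_left mult.left_commute)
    then show ?thesis using a_i by (simp add: Suc)
  qed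
qed

lemma tight_pair_valency:
  assumes "\<And>i. i < D \<Longrightarrow> b i > 0" and "\<And>i. i < D \<Longrightarrow> c i + a i + b i = b 0"
  shows "tight_pair D a b c \<theta> (b 0)"
proof -
  let ?\<sigma> = "pseudo_cosine_seq a b c \<theta>"
  have "pseudo_cosine_for D a b c \<theta> ?\<sigma>" using assms(1) by (rule pseudo_cosine_for_seq)
  moreover have "pseudo_cosine_for D a b c (b 0) (\<lambda>_. 1)"
    using assms(2) by (rule pseudo_cosine_for_const_1)
  ultimately show ?thesis
    unfolding tight_pair_def tight_seq_def pseudo_cosine_def by fastforce
qed

lemma tight_pair_neg_valency:
  assumes "\<And>i. i < D \<Longrightarrow> b i > 0" and "\<And>i. i < D \<Longrightarrow> c i + a i + b i = b 0"
    and "\<And>i. i < D \<Longrightarrow> a i = 0"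
  shows "tight_pair D a b c \<theta> (- real (b 0))"
proof -
  let ?\<sigma> = "pseudo_cosine_seq a b c \<theta>"
  have \<sigma>: "pseudo_cosine_for D a b c \<theta> ?\<sigma>" using assms(1) by (rule pseudo_cosine_for_seq)
  have "pseudo_cosine_for D a b c (- real (b 0)) (\<lambda>i. (-1) ^ i * 1)"
    using pseudo_cosine_for_sign_twist[OF assms(3)
        pseudo_cosine_for_const_1[where a = a and b = b and c = c, OF assms(2)]] .
  moreover have "pseudo_cosine_for D a b c (- \<theta>) (\<lambda>i. ?\<sigma> i * ((-1) ^ i * 1))"
    using pseudo_cosine_for_sign_twist[OF assms(3) \<sigma>] by (simp add: mult.commute)
  ultimately show ?thesis
    using \<sigma> unfolding tight_pair_def tight_seq_def pseudo_cosine_def by blast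
qed

lemma pseudo_cosine_for_first_terms:
  assumes "2 \<le> D" and "a 0 = 0" and "a 1 = 0" and "c 1 = 1" and "b 1 + 1 = b 0"
    and "pseudo_cosine_for D a b c \<theta> \<sigma>"
  shows "\<theta> = b 0 * \<sigma> 1" and "1 + (real (b 0) - 1) * \<sigma> 2 = b 0 * \<sigma> 1 ^ 2"
proof -
  have \<sigma>0: "\<sigma> 0 = 1" using assms(6) by (simp add: pseudo_cosine_for_def)
  show \<theta>: "\<theta> = b 0 * \<sigma> 1"
    using pseudo_cosine_for_recurrence[OF assms(6), of 0] assms(1,2) \<sigma>0 by simp
  have "real (b 1) = real (b 0) - 1" using assms(5) by (simp flip: of_nat_add)
  then show "1 + (real (b 0) - 1) * \<sigma> 2 = b 0 * \<sigma> 1 ^ 2"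
    using pseudo_cosine_for_recurrence[OF assms(6), of 1] assms(1,3,4) \<sigma>0 \<theta>
    by (simp add: numeral_2_eq_2 power2_eq_square)
qed

lemma second_term_relations_factor:
  fixes k s r u v :: real
  assumes "1 + (k - 1) * u = k * s ^ 2" and "1 + (k - 1) * v = k * r ^ 2"
    and "1 + (k - 1) * (u * v) = k * (s * r) ^ 2"
  shows "k * (s ^ 2 - 1) * (r ^ 2 - 1) = 0"
proof -
  have u: "(k - 1) * u = k * s ^ 2 - 1" and v: "(k - 1) * v = k * r ^ 2 - 1"
    and uv: "(k - 1) * (u * v) = k * (s * r) ^ 2 - 1"
    using assms by linarith+
  have "(k - 1) * ((k - 1) * (u * v)) = ((k - 1) * u) * ((k - 1) * v)" by algebra
  then have "(k - 1) * (k * (s * r) ^ 2 - 1) = (k * s ^ 2 - 1) * (k * r ^ 2 - 1)"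
    unfolding u v uv .
  then show ?thesis by algebra
qed

lemma tight_pair_contains_pm_valency:
  assumes "tight_pair D a b c \<theta> \<theta>'" and "2 \<le> D"
    and "a 0 = 0" and "a 1 = 0" and "c 1 = 1" and "b 1 + 1 = b 0"
  shows "\<theta> \<in> {real (b 0), - real (b 0)} \<or> \<theta>' \<in> {real (b 0), - real (b 0)}"
proof -
  obtain \<sigma> \<rho> \<theta>'' where \<sigma>: "pseudo_cosine_for D a b c \<theta> \<sigma>"
    and \<rho>: "pseudo_cosine_for D a b c \<theta>' \<rho>"
    and \<sigma>\<rho>: "pseudo_cosine_for D a b c \<theta>'' (\<lambda>i. \<sigma> i * \<rho> i)"
    using assms(1) unfolding tight_pair_def tight_seq_def pseudo_cosine_def by blast
  note first_terms = pseudo_cosine_for_first_terms[where a = a and b = b and c = c, OF assms(2-6)]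
  have "b 0 * (\<sigma> 1 ^ 2 - 1) * (\<rho> 1 ^ 2 - 1) = 0"
    using first_terms(2)[OF \<sigma>] first_terms(2)[OF \<rho>] first_terms(2)[OF \<sigma>\<rho>]
    by (intro second_term_relations_factor)
  then have "b 0 = 0 \<or> \<sigma> 1 \<in> {1, -1} \<or> \<rho> 1 \<in> {1, -1}"
    by (auto simp: power2_eq_1_iff)
  then show ?thesis using first_terms(1)[OF \<sigma>] first_terms(1)[OF \<rho>] by auto
qed

theorem theorem5p3:
  fixes V :: "'a set" and E :: "'a \<Rightarrow> 'a \<Rightarrow> bool"
    and D :: nat and a b c :: "nat \<Rightarrow> nat"
  assumes "drg V E D a b c"
    and "D \<ge> 3"
    and "bipartite_drg D a \<or> almost_bipartite_drg D a"
  shows "(\<forall>\<theta>. tight_pair D a b c \<theta> (real (b 0)))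
       \<and> (\<forall>\<theta>. tight_pair D a b c \<theta> (- real (b 0)))
       \<and> (\<forall>\<theta> \<theta>'. tight_pair D a b c \<theta> \<theta>' \<longrightarrow>
             \<theta> \<in> {real (b 0), - real (b 0)} \<or> \<theta>' \<in> {real (b 0), - real (b 0)})"
proof -
  interpret distance_regular_graph V E D a b c by (rule distance_regular_graph.intro) fact
  have a_0: "\<And>i. i < D \<Longrightarrow> a i = 0"
    using assms(3) unfolding bipartite_drg_def almost_bipartite_drg_def by auto
  have row_sum: "\<And>i. i < D \<Longrightarrow> c i + a i + b i = b 0" using intersection_numbers_sum by simp
  have "b 1 + 1 = b 0" using row_sum[of 1] a_0[of 1] c_1 assms(2) by simp
  then have "tight_pair D a b c \<theta> \<theta>' \<Longrightarrow>
      \<theta> \<in> {real (b 0), - real (b 0)} \<or> \<theta>' \<in> {real (b 0), - real (b 0)}" for \<theta> \<theta>'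
    using tight_pair_contains_pm_valency a_0 c_1 assms(2) by simp
  then show ?thesis
    using tight_pair_valency tight_pair_neg_valency b_pos row_sum a_0 by blast
qed

end
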